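(* Let $\mathcal{R}$ be a commutative ring with unity, $P$ a locally finite poset in which every maximal chain has at least three elements, and $b$ an additive biderivation of $I(P,\mathcal{R})$. For $x\in P$: (1) if $x$ is a minimal element of $P$, then $b(e_{xx},e_{xx})=\sum_{x<y,\ y\text{ maximal in }P}b_{xy}(e_{xx},e_{xx})\,e_{xy}$; (2) if $x$ is a maximal element of $P$, then $b(e_{xx},e_{xx})=\sum_{y<x,\ y\text{ minimal in }P}b_{yx}(e_{xx},e_{xx})\,e_{yx}$; (3) if $x$ is neither minimal nor maximal, then $b(e_{xx},e_{xx})=0$.
   Context: $I(P,\mathcal{R})$ is the incidence algebra: functions $f:P\times P\to\mathcal{R}$ with $f(x,y)=0$ unless $x\le y$, with product $(fg)(x,y)=\sum_{x\le z\le y}f(x,z)g(z,y)$; $e_{xy}$ ($x\le y$) is the function equal to $1$ at $(x,y)$ and $0$ elsewhere. An additive biderivation is a map $b$ of two arguments, additive in each, with $b(\alpha\beta,\gamma)=\alpha b(\beta,\gamma)+b(\alpha,\gamma)\beta$ and $b(\alpha,\beta\gamma)=\beta b(\alpha,\gamma)+b(\alpha,\beta)\gamma$. Write $b_{pq}(\alpha,\beta)=b(\alpha,\beta)(p,q)$. A maximal chain is a totally ordered subset to which no element of $P$ can be added keeping it totally ordered. $x$ is minimal (maximal) if no $y$ satisfies $y<x$ ($x<y$). *)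

theory Defs
  imports Main
begin

text \<open>Posets are modelled as types of class order (the whole type is P).
Elements of the incidence algebra I(P,R) are functions P \<Rightarrow> P \<Rightarrow> R.\<close>

definition locally_finite :: "'a::order itself \<Rightarrow> bool" where
  "locally_finite _ \<longleftrightarrow> (\<forall>x y::'a. finite {x..y})"

definition is_chain :: "'a::order set \<Rightarrow> bool" where
  "is_chain C \<longleftrightarrow> (\<forall>x\<in>C. \<forall>y\<in>C. x \<le> y \<or> y \<le> x)"

definition maximal_chain :: "'a::order set \<Rightarrow> bool" where
  "maximal_chain C \<longleftrightarrow> is_chain C \<and> (\<forall>z. is_chain (insert z C) \<longrightarrow> z \<in> C)"

definition has_at_least_three :: "'a set \<Rightarrow> bool" where
  "has_at_least_three C \<longleftrightarrow> (\<exists>a b c. a \<in> C \<and> b \<in> C \<and> c \<in> C \<and> a \<noteq> b \<and> a \<noteq> c \<and> b \<noteq> c)"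

definition minimal_elem :: "'a::order \<Rightarrow> bool" where
  "minimal_elem x \<longleftrightarrow> \<not> (\<exists>y. y < x)"

definition maximal_elem :: "'a::order \<Rightarrow> bool" where
  "maximal_elem x \<longleftrightarrow> \<not> (\<exists>y. x < y)"

definition incidence_algebra :: "('a::order \<Rightarrow> 'a \<Rightarrow> 'r::comm_ring_1) set" where
  "incidence_algebra = {f. \<forall>x y. \<not> x \<le> y \<longrightarrow> f x y = 0}"

definition inc_add :: "('a \<Rightarrow> 'a \<Rightarrow> 'r::comm_ring_1) \<Rightarrow> ('a \<Rightarrow> 'a \<Rightarrow> 'r) \<Rightarrow> ('a \<Rightarrow> 'a \<Rightarrow> 'r)" where
  "inc_add f g = (\<lambda>x y. f x y + g x y)"

definition inc_mult :: "('a::order \<Rightarrow> 'a \<Rightarrow> 'r::comm_ring_1) \<Rightarrow> ('a \<Rightarrow> 'a \<Rightarrow> 'r) \<Rightarrow> ('a \<Rightarrow> 'a \<Rightarrow> 'r)" where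
  "inc_mult f g = (\<lambda>x y. \<Sum>z\<in>{x..y}. f x z * g z y)"

definition e_unit :: "'a \<Rightarrow> 'a \<Rightarrow> ('a \<Rightarrow> 'a \<Rightarrow> 'r::comm_ring_1)" where
  "e_unit a b = (\<lambda>x y. if x = a \<and> y = b then 1 else 0)"

definition additive_biderivation ::
  "(('a::order \<Rightarrow> 'a \<Rightarrow> 'r::comm_ring_1) \<Rightarrow> ('a \<Rightarrow> 'a \<Rightarrow> 'r) \<Rightarrow> ('a \<Rightarrow> 'a \<Rightarrow> 'r)) \<Rightarrow> bool" where
  "additive_biderivation b \<longleftrightarrow>
     (\<forall>\<alpha>\<in>incidence_algebra. \<forall>\<beta>\<in>incidence_algebra. b \<alpha> \<beta> \<in> incidence_algebra) \<and>
     (\<forall>\<alpha>\<in>incidence_algebra. \<forall>\<beta>\<in>incidence_algebra. \<forall>\<gamma>\<in>incidence_algebra.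
        b (inc_add \<alpha> \<beta>) \<gamma> = inc_add (b \<alpha> \<gamma>) (b \<beta> \<gamma>) \<and>
        b \<alpha> (inc_add \<beta> \<gamma>) = inc_add (b \<alpha> \<beta>) (b \<alpha> \<gamma>) \<and>
        b (inc_mult \<alpha> \<beta>) \<gamma> = inc_add (inc_mult \<alpha> (b \<beta> \<gamma>)) (inc_mult (b \<alpha> \<gamma>) \<beta>) \<and>
        b \<alpha> (inc_mult \<beta> \<gamma>) = inc_add (inc_mult \<beta> (b \<alpha> \<gamma>)) (inc_mult (b \<alpha> \<beta>) \<gamma>))"

end

theory Submission imports Defs begin

text \<open>Write \<open>e = e\<^sub>x\<^sub>x\<close> and \<open>B = b(e, e)\<close>. Since \<open>e\<close> is idempotent, the derivation
rule gives \<open>B = e B + B e\<close>, so \<open>B\<close> lives on row \<open>x\<close> and column \<open>x\<close> and \<open>B(x, x) = 0\<close>.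
Bresar's identity \<open>[\<alpha>, \<beta>] b(\<gamma>, \<delta>) = b(\<alpha>, \<beta>) [\<gamma>, \<delta>]\<close> with \<open>\<gamma> = \<delta>\<close> or \<open>\<alpha> = \<beta>\<close> shows that
every \<open>b(\<gamma>, \<gamma>)\<close> is annihilated by the commutators \<open>[e\<^sub>s\<^sub>p, e\<^sub>p\<^sub>p] = e\<^sub>s\<^sub>p\<close> on the left and
\<open>[e\<^sub>q\<^sub>q, e\<^sub>q\<^sub>r] = e\<^sub>q\<^sub>r\<close> on the right; hence \<open>b(\<gamma>, \<gamma>)(p, q) = 0\<close> unless \<open>p\<close> is minimal and
\<open>q\<close> is maximal.\<close>

lemma locally_finite_finite_Icc:
  "locally_finite TYPE('a::order) \<Longrightarrow> finite {a..b::'a}"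
  by (simp add: locally_finite_def)

lemma inc_mult_assoc:
  fixes f g h :: "'a::order \<Rightarrow> 'a \<Rightarrow> 'r::comm_ring_1"
  assumes lf: "locally_finite TYPE('a)"
  shows "inc_mult (inc_mult f g) h = inc_mult f (inc_mult g h)"
proof (intro ext)
  fix x y :: 'a
  note fin = locally_finite_finite_Icc[OF lf]
  define F where "F w z = f x w * g w z * h z y" for w z
  have "inc_mult (inc_mult f g) h x y = (\<Sum>z\<in>{x..y}. \<Sum>w\<in>{x..z}. F w z)"
    by (simp add: inc_mult_def F_def sum_distrib_right)
  also have "\<dots> = (\<Sum>z\<in>{x..y}. \<Sum>w\<in>{x..y}. if w \<le> z then F w z else 0)"
  proof (rule sum.cong[OF refl])
    fix z assume "z \<in> {x..y}"
    then have "{x..z} = {w\<in>{x..y}. w \<le> z}" by (auto intro: order_trans)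
    then show "(\<Sum>w\<in>{x..z}. F w z) = (\<Sum>w\<in>{x..y}. if w \<le> z then F w z else 0)"
      by (metis (no_types) sum.inter_filter fin)
  qed
  also have "\<dots> = (\<Sum>w\<in>{x..y}. \<Sum>z\<in>{x..y}. if w \<le> z then F w z else 0)"
    by (rule sum.swap)
  also have "\<dots> = (\<Sum>w\<in>{x..y}. \<Sum>z\<in>{w..y}. F w z)"
  proof (rule sum.cong[OF refl])
    fix w assume "w \<in> {x..y}"
    then have "{w..y} = {z\<in>{x..y}. w \<le> z}" by (auto intro: order_trans)
    then show "(\<Sum>z\<in>{x..y}. if w \<le> z then F w z else 0) = (\<Sum>z\<in>{w..y}. F w z)"
      by (metis (no_types) sum.inter_filter fin)
  qed
  also have "\<dots> = inc_mult f (inc_mult g h) x y"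
    by (simp add: inc_mult_def F_def sum_distrib_left mult.assoc)
  finally show "inc_mult (inc_mult f g) h x y = inc_mult f (inc_mult g h) x y" .
qed

lemma inc_mult_distrib_left: "inc_mult f (inc_add g h) = inc_add (inc_mult f g) (inc_mult f h)"
  by (simp add: inc_mult_def inc_add_def distrib_left sum.distrib)

lemma inc_mult_distrib_right: "inc_mult (inc_add g h) f = inc_add (inc_mult g f) (inc_mult h f)"
  by (simp add: inc_mult_def inc_add_def distrib_right sum.distrib)

lemma inc_mult_in_incidence_algebra [simp]: "inc_mult f g \<in> incidence_algebra"
  by (simp add: incidence_algebra_def inc_mult_def)

lemma e_unit_in_incidence_algebra [simp]: "a \<le> a' \<Longrightarrow> e_unit a a' \<in> incidence_algebra"
  by (auto simp: incidence_algebra_def e_unit_def)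

lemma inc_mult_e_unit_left:
  fixes f :: "'a::order \<Rightarrow> 'a \<Rightarrow> 'r::comm_ring_1"
  assumes "locally_finite TYPE('a)" and "a \<le> a'"
  shows "inc_mult (e_unit a a') f = (\<lambda>p q. if p = a \<and> a' \<le> q then f a' q else 0)"
proof (intro ext)
  fix p q :: 'a
  have "inc_mult (e_unit a a') f p q = (if p = a then \<Sum>z\<in>{p..q}. of_bool (z = a') * f z q else 0)"
    by (simp add: inc_mult_def e_unit_def of_bool_def)
  then show "inc_mult (e_unit a a') f p q = (if p = a \<and> a' \<le> q then f a' q else 0)"
    using assms by (simp add: locally_finite_finite_Icc)
qed

lemma inc_mult_e_unit_right:
  fixes f :: "'a::order \<Rightarrow> 'a \<Rightarrow> 'r::comm_ring_1"
  assumes "locally_finite TYPE('a)" and "a \<le> a'"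
  shows "inc_mult f (e_unit a a') = (\<lambda>p q. if q = a' \<and> p \<le> a then f p a else 0)"
proof (intro ext)
  fix p q :: 'a
  have "inc_mult f (e_unit a a') p q = (if q = a' then \<Sum>z\<in>{p..q}. f p z * of_bool (z = a) else 0)"
    by (simp add: inc_mult_def e_unit_def of_bool_def)
  then show "inc_mult f (e_unit a a') p q = (if q = a' \<and> p \<le> a then f p a else 0)"
    using assms by (simp add: locally_finite_finite_Icc)
qed

lemma inc_mult_e_unit_e_unit:
  assumes "locally_finite TYPE('a::order)" and "a \<le> a'" and "c \<le> (c'::'a)"
  shows "inc_mult (e_unit a a') (e_unit c c') =
           (if a' = c then e_unit a c' else (\<lambda>_ _. (0::'r::comm_ring_1)))"
  unfolding inc_mult_e_unit_left[OF assms(1,2)] using assms(3) by (auto simp: e_unit_def fun_eq_iff)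

lemma additive_biderivation_closed:
  "additive_biderivation b \<Longrightarrow> \<alpha> \<in> incidence_algebra \<Longrightarrow> \<beta> \<in> incidence_algebra \<Longrightarrow>
     b \<alpha> \<beta> \<in> incidence_algebra"
  by (simp add: additive_biderivation_def)

lemma additive_biderivation_mult_left:
  "additive_biderivation b \<Longrightarrow>
     \<alpha> \<in> incidence_algebra \<Longrightarrow> \<beta> \<in> incidence_algebra \<Longrightarrow> \<gamma> \<in> incidence_algebra \<Longrightarrow>
     b (inc_mult \<alpha> \<beta>) \<gamma> = inc_add (inc_mult \<alpha> (b \<beta> \<gamma>)) (inc_mult (b \<alpha> \<gamma>) \<beta>)"
  unfolding additive_biderivation_def by blast

lemma additive_biderivation_mult_right:
  "additive_biderivation b \<Longrightarrow>
     \<alpha> \<in> incidence_algebra \<Longrightarrow> \<beta> \<in> incidence_algebra \<Longrightarrow> \<gamma> \<in> incidence_algebra \<Longrightarrow>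
     b \<alpha> (inc_mult \<beta> \<gamma>) = inc_add (inc_mult \<beta> (b \<alpha> \<gamma>)) (inc_mult (b \<alpha> \<beta>) \<gamma>)"
  unfolding additive_biderivation_def by blast

text \<open>Bresar's identity \<open>[\<alpha>, \<beta>] b(\<gamma>, \<delta>) = b(\<alpha>, \<beta>) [\<gamma>, \<delta>]\<close> with both sides moved so that no
subtraction occurs; it comes from expanding \<open>b(\<alpha>\<gamma>, \<beta>\<delta>)\<close> in the two possible orders.\<close>

lemma additive_biderivation_bresar:
  fixes b :: "('a::order \<Rightarrow> 'a \<Rightarrow> 'r::comm_ring_1) \<Rightarrow> ('a \<Rightarrow> 'a \<Rightarrow> 'r) \<Rightarrow> ('a \<Rightarrow> 'a \<Rightarrow> 'r)"
  assumes lf: "locally_finite TYPE('a)" and bd: "additive_biderivation b"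
    and I: "\<alpha> \<in> incidence_algebra" "\<beta> \<in> incidence_algebra"
           "\<gamma> \<in> incidence_algebra" "\<delta> \<in> incidence_algebra"
  shows "inc_add (inc_mult \<alpha> (inc_mult \<beta> (b \<gamma> \<delta>))) (inc_mult (b \<alpha> \<beta>) (inc_mult \<delta> \<gamma>))
       = inc_add (inc_mult \<beta> (inc_mult \<alpha> (b \<gamma> \<delta>))) (inc_mult (b \<alpha> \<beta>) (inc_mult \<gamma> \<delta>))"
proof -
  note left = additive_biderivation_mult_left[OF bd] and right = additive_biderivation_mult_right[OF bd]
  note expand = inc_mult_distrib_left inc_mult_distrib_right inc_mult_assoc[OF lf]
  have "b (inc_mult \<alpha> \<gamma>) (inc_mult \<beta> \<delta>) =
          inc_add (inc_mult \<alpha> (inc_add (inc_mult \<beta> (b \<gamma> \<delta>)) (inc_mult (b \<gamma> \<beta>) \<delta>)))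
                  (inc_mult (inc_add (inc_mult \<beta> (b \<alpha> \<delta>)) (inc_mult (b \<alpha> \<beta>) \<delta>)) \<gamma>)"
    using I by (subst left) (simp_all add: right)
  also have "\<dots> = inc_add (inc_add (inc_mult \<alpha> (inc_mult \<beta> (b \<gamma> \<delta>))) (inc_mult \<alpha> (inc_mult (b \<gamma> \<beta>) \<delta>)))
                          (inc_add (inc_mult \<beta> (inc_mult (b \<alpha> \<delta>) \<gamma>)) (inc_mult (b \<alpha> \<beta>) (inc_mult \<delta> \<gamma>)))"
    by (simp only: expand)
  finally have first: "b (inc_mult \<alpha> \<gamma>) (inc_mult \<beta> \<delta>) = \<dots>" .
  have "b (inc_mult \<alpha> \<gamma>) (inc_mult \<beta> \<delta>) =
          inc_add (inc_mult \<beta> (inc_add (inc_mult \<alpha> (b \<gamma> \<delta>)) (inc_mult (b \<alpha> \<delta>) \<gamma>)))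
                  (inc_mult (inc_add (inc_mult \<alpha> (b \<gamma> \<beta>)) (inc_mult (b \<alpha> \<beta>) \<gamma>)) \<delta>)"
    using I by (subst right) (simp_all add: left)
  also have "\<dots> = inc_add (inc_add (inc_mult \<beta> (inc_mult \<alpha> (b \<gamma> \<delta>))) (inc_mult \<beta> (inc_mult (b \<alpha> \<delta>) \<gamma>)))
                          (inc_add (inc_mult \<alpha> (inc_mult (b \<gamma> \<beta>) \<delta>)) (inc_mult (b \<alpha> \<beta>) (inc_mult \<gamma> \<delta>)))"
    by (simp only: expand)
  finally have second: "b (inc_mult \<alpha> \<gamma>) (inc_mult \<beta> \<delta>) = \<dots>" .
  show ?thesis
    using first second by (simp add: inc_add_def fun_eq_iff algebra_simps)
qed

lemma additive_biderivation_diag_row_zero: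
  fixes b :: "('a::order \<Rightarrow> 'a \<Rightarrow> 'r::comm_ring_1) \<Rightarrow> ('a \<Rightarrow> 'a \<Rightarrow> 'r) \<Rightarrow> ('a \<Rightarrow> 'a \<Rightarrow> 'r)"
  assumes lf: "locally_finite TYPE('a)" and bd: "additive_biderivation b"
    and \<gamma>: "\<gamma> \<in> incidence_algebra" and "s < p"
  shows "b \<gamma> \<gamma> p q = 0"
proof -
  have "s \<noteq> p" using \<open>s < p\<close> by simp
  have "inc_add (inc_mult (e_unit s p) (inc_mult (e_unit p p) (b \<gamma> \<gamma>)))
                (inc_mult (b (e_unit s p) (e_unit p p)) (inc_mult \<gamma> \<gamma>))
      = inc_add (inc_mult (e_unit p p) (inc_mult (e_unit s p) (b \<gamma> \<gamma>)))
                (inc_mult (b (e_unit s p) (e_unit p p)) (inc_mult \<gamma> \<gamma>))"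
    using assms by (intro additive_biderivation_bresar) auto
  then have "inc_mult (e_unit s p) (b \<gamma> \<gamma>) = inc_mult (inc_mult (e_unit p p) (e_unit s p)) (b \<gamma> \<gamma>)"
    using \<open>s < p\<close> by (simp add: inc_add_def fun_eq_iff inc_mult_assoc[OF lf, symmetric]
                                  inc_mult_e_unit_e_unit[OF lf])
  also have "inc_mult (e_unit p p) (e_unit s p) = (\<lambda>_ _. 0)"
    using \<open>s < p\<close> \<open>s \<noteq> p\<close> by (simp add: inc_mult_e_unit_e_unit[OF lf])
  finally have "inc_mult (e_unit s p) (b \<gamma> \<gamma>) s q = 0"
    by (simp add: inc_mult_def)
  then show ?thesis
    using additive_biderivation_closed[OF bd \<gamma> \<gamma>] \<open>s < p\<close>
    by (auto simp: inc_mult_e_unit_left[OF lf] incidence_algebra_def split: if_split_asm)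
qed

lemma additive_biderivation_diag_col_zero:
  fixes b :: "('a::order \<Rightarrow> 'a \<Rightarrow> 'r::comm_ring_1) \<Rightarrow> ('a \<Rightarrow> 'a \<Rightarrow> 'r) \<Rightarrow> ('a \<Rightarrow> 'a \<Rightarrow> 'r)"
  assumes lf: "locally_finite TYPE('a)" and bd: "additive_biderivation b"
    and \<gamma>: "\<gamma> \<in> incidence_algebra" and "q < r"
  shows "b \<gamma> \<gamma> p q = 0"
proof -
  have "r \<noteq> q" using \<open>q < r\<close> by simp
  have "inc_add (inc_mult \<gamma> (inc_mult \<gamma> (b (e_unit q q) (e_unit q r))))
                (inc_mult (b \<gamma> \<gamma>) (inc_mult (e_unit q r) (e_unit q q)))
      = inc_add (inc_mult \<gamma> (inc_mult \<gamma> (b (e_unit q q) (e_unit q r))))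
                (inc_mult (b \<gamma> \<gamma>) (inc_mult (e_unit q q) (e_unit q r)))"
    using assms by (intro additive_biderivation_bresar) auto
  then have "inc_mult (b \<gamma> \<gamma>) (e_unit q r) = inc_mult (b \<gamma> \<gamma>) (inc_mult (e_unit q r) (e_unit q q))"
    using \<open>q < r\<close> by (simp add: inc_add_def fun_eq_iff inc_mult_e_unit_e_unit[OF lf])
  also have "inc_mult (e_unit q r) (e_unit q q) = (\<lambda>_ _. 0)"
    using \<open>q < r\<close> \<open>r \<noteq> q\<close> by (simp add: inc_mult_e_unit_e_unit[OF lf])
  finally have "inc_mult (b \<gamma> \<gamma>) (e_unit q r) p r = 0"
    by (simp add: inc_mult_def)
  then show ?thesis
    using additive_biderivation_closed[OF bd \<gamma> \<gamma>] \<open>q < r\<close>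
    by (auto simp: inc_mult_e_unit_right[OF lf] incidence_algebra_def split: if_split_asm)
qed

lemma additive_biderivation_idempotent:
  assumes "additive_biderivation b" and "\<epsilon> \<in> incidence_algebra" and "inc_mult \<epsilon> \<epsilon> = \<epsilon>"
  shows "b \<epsilon> \<epsilon> = inc_add (inc_mult \<epsilon> (b \<epsilon> \<epsilon>)) (inc_mult (b \<epsilon> \<epsilon>) \<epsilon>)"
  using additive_biderivation_mult_left[OF assms(1,2,2,2)] assms(3) by simp

lemma additive_biderivation_e_unit_diag:
  fixes b :: "('a::order \<Rightarrow> 'a \<Rightarrow> 'r::comm_ring_1) \<Rightarrow> ('a \<Rightarrow> 'a \<Rightarrow> 'r) \<Rightarrow> ('a \<Rightarrow> 'a \<Rightarrow> 'r)"
  assumes lf: "locally_finite TYPE('a)" and bd: "additive_biderivation b"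
  shows "b (e_unit x x) (e_unit x x) p q =
           (if p = x then b (e_unit x x) (e_unit x x) x q else 0)
         + (if q = x then b (e_unit x x) (e_unit x x) p x else 0)"
proof -
  let ?e = "e_unit x x :: 'a \<Rightarrow> 'a \<Rightarrow> 'r"
  have "b ?e ?e = inc_add (inc_mult ?e (b ?e ?e)) (inc_mult (b ?e ?e) ?e)"
    by (rule additive_biderivation_idempotent[OF bd]) (simp_all add: inc_mult_e_unit_e_unit[OF lf])
  then have "b ?e ?e p q = inc_add (inc_mult ?e (b ?e ?e)) (inc_mult (b ?e ?e) ?e) p q"
    by simp
  also have "\<dots> = (if p = x then b ?e ?e x q else 0) + (if q = x then b ?e ?e p x else 0)"
    using additive_biderivation_closed[OF bd e_unit_in_incidence_algebra e_unit_in_incidence_algebra]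
    by (auto simp: inc_add_def inc_mult_e_unit_left[OF lf] inc_mult_e_unit_right[OF lf]
                   incidence_algebra_def)
  finally show ?thesis .
qed

theorem mainTheorem11:
  fixes b :: "('a::order \<Rightarrow> 'a \<Rightarrow> 'r::comm_ring_1) \<Rightarrow> ('a \<Rightarrow> 'a \<Rightarrow> 'r) \<Rightarrow> ('a \<Rightarrow> 'a \<Rightarrow> 'r)"
    and x :: 'a
  assumes "locally_finite TYPE('a)"
    and "\<forall>C::'a set. maximal_chain C \<longrightarrow> has_at_least_three C"
    and "additive_biderivation b"
  shows "(minimal_elem x \<longrightarrow>
            b (e_unit x x) (e_unit x x) =
              (\<lambda>p q. if p = x \<and> x < q \<and> maximal_elem q
                      then b (e_unit x x) (e_unit x x) x q else 0))
       \<and> (maximal_elem x \<longrightarrow>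
            b (e_unit x x) (e_unit x x) =
              (\<lambda>p q. if q = x \<and> p < x \<and> minimal_elem p
                      then b (e_unit x x) (e_unit x x) p x else 0))
       \<and> (\<not> minimal_elem x \<and> \<not> maximal_elem x \<longrightarrow>
            b (e_unit x x) (e_unit x x) = (\<lambda>p q. 0))"
proof -
  note lf = assms(1) and bd = assms(3)
  define B where "B = b (e_unit x x) (e_unit x x)"
  have split: "B p q = (if p = x then B x q else 0) + (if q = x then B p x else 0)" for p q
    unfolding B_def by (rule additive_biderivation_e_unit_diag[OF lf bd])
  have diag: "B x x = 0"
    using split[of x x] by simp
  have row: "\<not> minimal_elem p \<Longrightarrow> B p q = 0" for p q
    unfolding B_def minimal_elem_def using additive_biderivation_diag_row_zero[OF lf bd] by auto
  have col: "\<not> maximal_elem q \<Longrightarrow> B p q = 0" for p q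
    unfolding B_def maximal_elem_def using additive_biderivation_diag_col_zero[OF lf bd] by auto
  have "B \<in> incidence_algebra"
    unfolding B_def by (simp add: additive_biderivation_closed[OF bd])
  then have below: "B p q = 0" if "\<not> p \<le> q" for p q
    using that by (simp add: incidence_algebra_def)
  show ?thesis
    unfolding B_def[symmetric]
  proof (intro conjI impI ext)
    fix p q
    assume "minimal_elem x"
    then have "\<not> p < x" by (simp add: minimal_elem_def)
    then show "B p q = (if p = x \<and> x < q \<and> maximal_elem q then B x q else 0)"
      using split[of p q] diag below[of p q] col[where p = p and q = q]
      by (cases "p = x"; cases "q = x") (auto simp: order.order_iff_strict)
  next
    fix p q
    assume "maximal_elem x"
    then have "\<not> x < q" by (simp add: maximal_elem_def)
    then show "B p q = (if q = x \<and> p < x \<and> minimal_elem p then B p x else 0)"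
      using split[of p q] diag below[of p q] row[where p = p and q = q]
      by (cases "p = x"; cases "q = x") (auto simp: order.order_iff_strict)
  next
    fix p q
    assume "\<not> minimal_elem x \<and> \<not> maximal_elem x"
    then show "B p q = 0"
      using split[of p q] row[where p = x and q = q] col[where p = p and q = x] by (cases "p = x"; cases "q = x") auto
  qed
qed

end
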